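(* Let $M>0$ be fixed and, for integers $N\ge1$, let \[ p_N(\lambda)=-\lambda(-M-\lambda)^N+M\,N!\sum_{n=0}^{N-1}\frac{(-M-\lambda)^n}{n!}+(-1)^N M\,N!\,. \] Then there exists $N_0$ such that for all $N\ge N_0$ the polynomial $p_N$ has at least one positive real root.
   Context: $p_N$ is the characteristic polynomial of the coefficient matrix of the linear ODE system satisfied by the $N$-th order $(x,v)$-moments of solutions of Model A, $\partial_tf+v\partial_xf=S[\rho_f](x+v)\rho_f(x)-Mf$, with $M$ the total mass. *)

theory Defs
  imports Complex_Main
begin

definition pN :: "real \<Rightarrow> nat \<Rightarrow> real \<Rightarrow> real" where
  "pN M N lam = - lam * (- M - lam) ^ N
     + M * fact N * (\<Sum>n<N. (- M - lam) ^ n / fact n)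
     + (-1) ^ N * M * fact N"

end

theory Submission
  imports Defs
begin

text \<open>Multiplying by \<open>(-1)^N\<close> makes the leading term \<open>-\<lambda>(\<lambda>+M)^N\<close>. At \<open>\<lambda> = 0\<close> the
  normalised polynomial is \<open>M N! (1 + (-1)^N S\<^sub>N)\<close>, where \<open>S\<^sub>N\<close> is the \<open>N\<close>-th partial sum of
  \<open>exp (-M) \<in> (0,1)\<close>; so it is positive once \<open>|S\<^sub>N| < 1\<close>. For \<open>\<lambda>\<close> of order \<open>M N! N\<close> the
  leading term dominates the remaining terms, which are crudely bounded by \<open>M N! (N+1)(\<lambda>+M)^N\<close>.
  The intermediate value theorem then gives a positive root.\<close>

lemma abs_sum_neg_power_div_fact_le:
  fixes y :: real
  assumes "y \<ge> 1"
  shows "\<bar>\<Sum>n<N. (-y)^n / fact n\<bar> \<le> real N * y^N"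
proof -
  have "\<bar>\<Sum>n<N. (-y)^n / fact n\<bar> \<le> (\<Sum>n<N. \<bar>(-y)^n / fact n\<bar>)"
    by (rule sum_abs)
  also have "\<dots> \<le> (\<Sum>n<N. y^N)"
  proof (rule sum_mono)
    fix n assume "n \<in> {..<N}"
    have "\<bar>(-y)^n / fact n\<bar> = y^n / fact n"
      using assms by (simp add: power_abs)
    also have "\<dots> \<le> y^n"
      using assms by (simp add: divide_le_eq fact_ge_1 mult_le_cancel_left1)
    also have "\<dots> \<le> y^N"
      using assms \<open>n \<in> {..<N}\<close> by (simp add: power_increasing)
    finally show "\<bar>(-y)^n / fact n\<bar> \<le> y^N" .
  qed
  finally show ?thesis by simp
qed

lemma eventually_abs_exp_partial_sum_less_1:
  fixes x :: real
  assumes "x < 0"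
  shows "eventually (\<lambda>N. \<bar>\<Sum>n<N. x^n / fact n\<bar> < 1) sequentially"
proof -
  have lim: "(\<lambda>N. \<Sum>n<N. x^n / fact n) \<longlonglongrightarrow> exp x"
    using exp_converges[of x] by (simp add: sums_def field_simps)
  have "exp x < 1" "-1 < exp x"
    using assms by (auto intro: less_trans[OF _ exp_gt_zero])
  then have "eventually (\<lambda>N. (\<Sum>n<N. x^n / fact n) < 1 \<and> -1 < (\<Sum>n<N. x^n / fact n))
      sequentially"
    using order_tendstoD[OF lim] by (intro eventually_conj)
  then show ?thesis
    by (simp add: abs_less_iff)
qed

lemma neg_one_power_mult_pN_zero_pos:
  assumes "M > 0" and "\<bar>\<Sum>n<N. (-M)^n / fact n\<bar> < 1"
  shows "(-1)^N * pN M N 0 > 0"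
proof -
  define S where "S = (\<Sum>n<N. (-M)^n / fact n)"
  have sq: "((-1::real)^N) * (-1)^N = 1"
    by (simp flip: power_mult_distrib)
  have "(-1)^N * pN M N 0 = M * fact N * (1 + (-1)^N * S)"
    unfolding pN_def S_def using sq by (simp add: algebra_simps)
  moreover have "\<bar>(-1)^N * S\<bar> < 1"
    using assms(2) by (simp add: S_def abs_mult power_abs)
  ultimately show ?thesis
    using assms(1) by (simp add: abs_less_iff)
qed

lemma neg_one_power_mult_pN_neg:
  assumes "M > 0"
  shows "(-1)^N * pN M N (M * fact N * (real N + 1) + 1) < 0"
    (is "_ * pN M N ?L < 0")
proof -
  define L where "L = ?L"
  define y where "y = M + L"
  have "y \<ge> 1"
    using assms by (simp add: y_def L_def)
  define T where "T = (\<Sum>n<N. (-y)^n / fact n)"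
  have sq: "((-1::real)^N) * (-1)^N = 1"
    by (simp flip: power_mult_distrib)
  have "(-1)^N * (-y)^N = y^N"
    by (simp flip: power_mult_distrib)
  moreover have "-M - L = -y"
    by (simp add: y_def)
  ultimately have expand: "(-1)^N * pN M N L = - L * y^N + M * fact N * ((-1)^N * T + 1)"
    unfolding pN_def T_def using sq by (simp only:) (simp add: algebra_simps)
  have "y^N \<ge> 1"
    using \<open>y \<ge> 1\<close> by simp
  have "(-1)^N * T \<le> \<bar>T\<bar>"
    using abs_ge_self[of "(-1)^N * T"] by (simp add: abs_mult power_abs)
  then have "(-1)^N * T + 1 \<le> \<bar>T\<bar> + y^N"
    using \<open>y^N \<ge> 1\<close> by linarith
  also have "\<dots> \<le> (real N + 1) * y^N"
    using abs_sum_neg_power_div_fact_le[OF \<open>y \<ge> 1\<close>, of N] by (simp add: T_def algebra_simps)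
  finally have "M * fact N * ((-1)^N * T + 1) \<le> M * fact N * ((real N + 1) * y^N)"
    using assms(1) by (intro mult_left_mono) simp_all
  moreover have "L * y^N = M * fact N * ((real N + 1) * y^N) + y^N"
    by (simp add: L_def algebra_simps)
  ultimately show ?thesis
    using expand \<open>y^N \<ge> 1\<close> unfolding L_def by linarith
qed

lemma pN_has_positive_root:
  assumes "M > 0" and "\<bar>\<Sum>n<N. (-M)^n / fact n\<bar> < 1"
  shows "\<exists>lam > 0. pN M N lam = 0"
proof -
  define g where "g lam = (-1)^N * pN M N lam" for lam
  define L where "L = M * fact N * (real N + 1) + 1"
  have "L > 0"
    using assms(1) by (simp add: L_def add_pos_nonneg)
  have "g 0 > 0" "g L < 0"
    using neg_one_power_mult_pN_zero_pos[OF assms] neg_one_power_mult_pN_neg[OF assms(1)]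
    by (simp_all add: g_def L_def)
  moreover have "\<forall>x. 0 \<le> x \<and> x \<le> L \<longrightarrow> isCont g x"
    unfolding g_def pN_def by (auto intro!: continuous_intros)
  ultimately obtain x where "0 \<le> x" "x \<le> L" "g x = 0"
    using IVT2[of g L 0 0] \<open>L > 0\<close> by auto
  moreover from \<open>g 0 > 0\<close> \<open>g x = 0\<close> have "x \<noteq> 0"
    by auto
  ultimately have "x > 0" "pN M N x = 0"
    by (auto simp: g_def)
  then show ?thesis
    by blast
qed

theorem lemma3:
  fixes M :: real
  assumes "M > 0"
  shows "\<exists>N0::nat. \<forall>N\<ge>N0. N \<ge> 1 \<longrightarrow> (\<exists>lam::real. lam > 0 \<and> pN M N lam = 0)"
proof -
  obtain N0 where "\<And>N. N \<ge> N0 \<Longrightarrow> \<bar>\<Sum>n<N. (-M)^n / fact n\<bar> < 1"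
    using eventually_abs_exp_partial_sum_less_1[of "-M"] assms
    unfolding eventually_sequentially by auto
  then show ?thesis
    using pN_has_positive_root[OF assms] by blast
qed

end
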